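(* Let $P$ be a partial order on $U=\{u_1,\dots,u_n\}$, let $\widetilde G=(U,V,\widetilde E)=\widehat C(P)$, let $H$ be the associated split graph of $\widetilde G$ and $H^*$ the conflict graph of $H$. Then every edge $u_iv_i$, $1\le i\le n$, is an isolated vertex of $H^*$.
   Context: $V=\{v_1,\dots,v_n\}$ is a disjoint copy of $U$ and $\widehat C(P)=(U,V,\widetilde E)$ is the bipartite graph with $u_iv_j\in\widetilde E$ iff NOT $u_i<_Pu_j$ (so $u_iv_i\in\widetilde E$). The associated split graph $H$ has vertex set $U\cup V$ and edge set $\widetilde E$ together with all pairs of distinct vertices of $V$. Two edges $e,e'$ of $H$ are in conflict if there are vertices $w_1,\dots,w_4$ (not necessarily distinct) with $e=w_2w_3$, $e'=w_4w_1$ and $w_1w_2,w_3w_4$ non-edges of $H$; the conflict graph $H^*$ has the edges of $H$ as vertices, adjacent iff in conflict. *)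

theory Defs
  imports Main
begin

text \<open>The poset P on the finite ground set U is given as a (reflexive) partial order
relation r on U (library notion partial_order_on); u <_P w means (u,w) \<in> r and u \<noteq> w.
The vertices of the split graph H are Inl u (the copy u_i in U) and Inr u
(the disjoint copy v_i in V).\<close>

definition strict_less :: "('a \<times> 'a) set \<Rightarrow> 'a \<Rightarrow> 'a \<Rightarrow> bool" where
  "strict_less r x y \<longleftrightarrow> (x, y) \<in> r \<and> x \<noteq> y"

definition split_vertices :: "'a set \<Rightarrow> ('a + 'a) set" where
  "split_vertices U = Inl ` U \<union> Inr ` U"

fun split_adj :: "'a set \<Rightarrow> ('a \<times> 'a) set \<Rightarrow> ('a + 'a) \<Rightarrow> ('a + 'a) \<Rightarrow> bool" where
  "split_adj U r (Inl u) (Inr v) = (u \<in> U \<and> v \<in> U \<and> \<not> strict_less r u v)"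
| "split_adj U r (Inr v) (Inl u) = (u \<in> U \<and> v \<in> U \<and> \<not> strict_less r u v)"
| "split_adj U r (Inr v) (Inr w) = (v \<in> U \<and> w \<in> U \<and> v \<noteq> w)"
| "split_adj U r (Inl u) (Inl w) = False"

definition split_edges :: "'a set \<Rightarrow> ('a \<times> 'a) set \<Rightarrow> ('a + 'a) set set" where
  "split_edges U r = {{x, y} | x y. split_adj U r x y}"

definition split_nonedge :: "'a set \<Rightarrow> ('a \<times> 'a) set \<Rightarrow> ('a + 'a) \<Rightarrow> ('a + 'a) \<Rightarrow> bool" where
  "split_nonedge U r x y \<longleftrightarrow> x \<in> split_vertices U \<and> y \<in> split_vertices U \<and> x \<noteq> y
      \<and> \<not> split_adj U r x y"

definition in_conflict :: "'a set \<Rightarrow> ('a \<times> 'a) set \<Rightarrow> ('a + 'a) set \<Rightarrow> ('a + 'a) set \<Rightarrow> bool" where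
  "in_conflict U r e e' \<longleftrightarrow>
     e \<in> split_edges U r \<and> e' \<in> split_edges U r \<and>
     (\<exists>w1 w2 w3 w4. e = {w2, w3} \<and> e' = {w4, w1}
        \<and> split_nonedge U r w1 w2 \<and> split_nonedge U r w3 w4)"

definition isolated_in_conflict_graph :: "'a set \<Rightarrow> ('a \<times> 'a) set \<Rightarrow> ('a + 'a) set \<Rightarrow> bool" where
  "isolated_in_conflict_graph U r e \<longleftrightarrow>
     e \<in> split_edges U r \<and> (\<forall>e' \<in> split_edges U r. \<not> in_conflict U r e e')"

end

theory Submission
  imports Defs
begin

text \<open>A non-neighbour of \<open>v\<^sub>i\<close> is some \<open>u\<^sub>x\<close> with \<open>x <\<^sub>P u\<^sub>i\<close>; a non-neighbour of \<open>u\<^sub>i\<close> is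
either in the independent set \<open>U\<close> or some \<open>v\<^sub>y\<close> with \<open>u\<^sub>i <\<^sub>P y\<close>. By transitivity no such two
vertices are adjacent, yet a conflicting edge would have to join them.\<close>

lemma split_adj_sym: "split_adj U r x y \<Longrightarrow> split_adj U r y x"
  by (cases x; cases y) auto

lemma split_adj_if_edge: "{x, y} \<in> split_edges U r \<Longrightarrow> split_adj U r x y"
  unfolding split_edges_def by (auto simp: doubleton_eq_iff dest: split_adj_sym)

lemma split_nonedge_sym: "split_nonedge U r x y \<Longrightarrow> split_nonedge U r y x"
  unfolding split_nonedge_def using split_adj_sym by blast

lemma strict_less_trans:
  assumes "partial_order_on U r" "strict_less r x y" "strict_less r y z"
  shows "strict_less r x z"
proof -
  from assms(1) have "trans r" "antisym r"
    unfolding partial_order_on_def preorder_on_def by auto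
  with assms(2,3) show ?thesis
    unfolding strict_less_def trans_def antisym_def by blast
qed

lemma split_nonedge_InlE:
  assumes "split_nonedge U r (Inl u) w" "u \<in> U"
  obtains x where "w = Inl x" | y where "w = Inr y" "strict_less r u y"
  using assms unfolding split_nonedge_def split_vertices_def by (cases w) auto

lemma split_nonedge_InrE:
  assumes "split_nonedge U r (Inr u) w" "u \<in> U"
  obtains x where "w = Inl x" "strict_less r x u"
  using assms unfolding split_nonedge_def split_vertices_def by (cases w) auto

lemma split_nonedges_of_diagonal_not_adj:
  assumes "partial_order_on U r" "u \<in> U"
    and "split_nonedge U r (Inr u) a" "split_nonedge U r (Inl u) b"
  shows "\<not> split_adj U r a b"
proof -
  obtain x where a: "a = Inl x" and "strict_less r x u"
    using split_nonedge_InrE[OF assms(3,2)] .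
  from split_nonedge_InlE[OF assms(4,2)] show ?thesis
  proof cases
    case (2 y)
    with \<open>strict_less r x u\<close> have "strict_less r x y"
      using strict_less_trans[OF assms(1)] by blast
    with a \<open>b = Inr y\<close> show ?thesis by simp
  qed (simp add: a)
qed

lemma diagonal_edge_in_split_edges:
  assumes "u \<in> U"
  shows "{Inl u, Inr u} \<in> split_edges U r"
proof -
  have "split_adj U r (Inl u) (Inr u)"
    using assms by (simp add: strict_less_def)
  then show ?thesis unfolding split_edges_def by blast
qed

theorem lemma13:
  fixes U :: "'a set" and r :: "('a \<times> 'a) set"
  assumes "finite U" and "partial_order_on U r" and "u \<in> U"
  shows "isolated_in_conflict_graph U r {Inl u, Inr u}"
proof -
  have "\<not> in_conflict U r {Inl u, Inr u} e'" for e'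
  proof
    assume "in_conflict U r {Inl u, Inr u} e'"
    then obtain w1 w2 w3 w4 where "split_adj U r w4 w1"
      and ends: "{Inl u, Inr u} = {w2, w3}"
      and n12: "split_nonedge U r w1 w2" and n34: "split_nonedge U r w3 w4"
      unfolding in_conflict_def using split_adj_if_edge by blast
    from ends have "w2 = Inl u \<and> w3 = Inr u \<or> w2 = Inr u \<and> w3 = Inl u"
      by (auto simp: doubleton_eq_iff)
    with n12 n34 \<open>split_adj U r w4 w1\<close> show False
      using split_nonedges_of_diagonal_not_adj[OF assms(2,3)]
        split_nonedge_sym split_adj_sym by blast
  qed
  then show ?thesis
    using diagonal_edge_in_split_edges[OF assms(3)]
    unfolding isolated_in_conflict_graph_def by blast
qed

end
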